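(* Let $G\in L_2(U,\mu)$, $w=\sum_\alpha w_\alpha\mathfrak{N}_\alpha$ with $w_\alpha\in\mathbb{R}$, and $f=\sum_\alpha f_\alpha(t,\upsilon)\mathfrak{N}_\alpha$ with $f_\alpha\in L_2(U,\mu)$ for each $\alpha$. Then the equation $$u(t)=w+\int_0^t\int_V[u(s)G(s,\upsilon)+f(s,\upsilon)]\diamond\mathfrak{N}(ds,d\upsilon),\quad 0\le t\le T,$$ has a unique solution $u(t)=\sum_\alpha u_\alpha(t)\mathfrak{N}_\alpha$ in the class of generalized processes whose coefficients $u_\alpha$ are continuous on $[0,T]$. Its coefficients are $u_0(t)=w_0$ and, for $|\alpha|\ge1$, $$u_\alpha(t)=w_\alpha+\sum_{k:\alpha_k\ge1}\int_0^t\int_V[u_{\alpha-\varepsilon_k}(r)G(r,\upsilon)+f_{\alpha-\varepsilon_k}(r,\upsilon)]m_k(r,\upsilon)\pi(d\upsilon)dr,\quad 0\le t\le T.$$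
   Context: Let $(V,\mathcal{V},\pi)$ be a $\sigma$-finite measure space, $U=[0,T]\times V$, $\mu=dt\otimes\pi$, $\{m_k\}$ a complete orthonormal system of $L_2(U,\mu)$; $\mathfrak{N}:L_2(U,\mu)\to L_2(\Omega,\mathbf{P})$ a mean-zero linear isometry, $\xi_k=\mathfrak{N}(m_k)$. $J$: finitely supported multi-indices of nonnegative integers, $\varepsilon_k$ unit multi-indices; $\{\mathfrak{N}_\alpha\}$ an orthogonal family with $\mathbf{E}\mathfrak{N}_\alpha^2=\alpha!$, $\mathfrak{N}_0=1$, obtained by degreewise orthogonalization of monomials in the $\xi_k$. Generalized random variables/processes are formal series $\sum_\alpha u_\alpha\mathfrak{N}_\alpha$ (with $u_\alpha$ numbers, resp. functions of $t$); equality means equality of all coefficients. For $h=\sum_\alpha h_\alpha(s,\upsilon)\mathfrak{N}_\alpha$ with $h_\alpha\in L_2(U,\mu)$, $\int_0^t\int_Vh\diamond\mathfrak{N}(ds,d\upsilon):=\delta(\chi_{[0,t]}h)=\sum_\alpha\sum_k\left(\int_0^t\int_Vh_\alpha m_k\,d\pi ds\right)\mathfrak{N}_{\alpha+\varepsilon_k}$; and $u(s)G(s,\upsilon):=\sum_\alpha u_\alpha(s)G(s,\upsilon)\mathfrak{N}_\alpha$. *)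

theory Defs
  imports "HOL-Analysis.Analysis" "HOL-Library.Poly_Mapping"
begin

type_synonym mindex = "nat \<Rightarrow>\<^sub>0 nat"

definition eps :: "nat \<Rightarrow> mindex" where
  "eps k = Poly_Mapping.single k 1"

(* mu = dt (x) pi on U = [0,T] x V, V = space pi *)
definition U_measure :: "real \<Rightarrow> 'v measure \<Rightarrow> (real \<times> 'v) measure" where
  "U_measure T \<pi> = restrict_space lborel {0..T} \<Otimes>\<^sub>M \<pi>"

(* L_2(M) as a set of (representatives of) square integrable real functions *)
definition L2 :: "'a measure \<Rightarrow> ('a \<Rightarrow> real) set" where
  "L2 M = {g. g \<in> borel_measurable M \<and> integrable M (\<lambda>x. (g x)\<^sup>2)}"

definition complete_ONS :: "'a measure \<Rightarrow> (nat \<Rightarrow> 'a \<Rightarrow> real) \<Rightarrow> bool" where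
  "complete_ONS M m \<longleftrightarrow>
     (\<forall>k. m k \<in> L2 M) \<and>
     (\<forall>j k. (\<integral>x. m j x * m k x \<partial>M) = (if j = k then 1 else 0)) \<and>
     (\<forall>g\<in>L2 M. (\<forall>k. (\<integral>x. g x * m k x \<partial>M) = 0) \<longrightarrow> (AE x in M. g x = 0))"

definition int_tV :: "real \<Rightarrow> 'v measure \<Rightarrow> real \<Rightarrow> (real \<times> 'v \<Rightarrow> real) \<Rightarrow> real" where
  "int_tV T \<pi> t h = set_lebesgue_integral (U_measure T \<pi>) ({0..t} \<times> space \<pi>) h"

(* Coefficient at N_beta of  int_0^t int_V h <> N(ds,dv)
   = sum_alpha sum_k (int_0^t int_V h_alpha m_k) N_(alpha+eps_k),
   where h = sum_alpha h_alpha N_alpha is given by its coefficient family.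
   The pairs (alpha,k) with alpha + eps_k = beta are exactly
   k with beta_k >= 1 and alpha = beta - eps_k. *)
definition diamond_int ::
  "real \<Rightarrow> 'v measure \<Rightarrow> (nat \<Rightarrow> real \<times> 'v \<Rightarrow> real)
     \<Rightarrow> (mindex \<Rightarrow> real \<times> 'v \<Rightarrow> real) \<Rightarrow> real \<Rightarrow> mindex \<Rightarrow> real" where
  "diamond_int T \<pi> m h t \<beta> =
     (\<Sum>k\<in>{k. Poly_Mapping.lookup \<beta> k \<ge> 1}. int_tV T \<pi> t (\<lambda>x. h (\<beta> - eps k) x * m k x))"

(* u solves u(t) = w + int_0^t int_V [u(s)G + f] <> N(ds,dv), 0<=t<=T,
   in the class of generalized processes with continuous coefficients;
   equality of generalized processes = equality of all coefficients. *)
definition is_solution ::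
  "real \<Rightarrow> 'v measure \<Rightarrow> (nat \<Rightarrow> real \<times> 'v \<Rightarrow> real) \<Rightarrow> (real \<times> 'v \<Rightarrow> real)
     \<Rightarrow> (mindex \<Rightarrow> real) \<Rightarrow> (mindex \<Rightarrow> real \<times> 'v \<Rightarrow> real) \<Rightarrow> (mindex \<Rightarrow> real \<Rightarrow> real) \<Rightarrow> bool" where
  "is_solution T \<pi> m G w f u \<longleftrightarrow>
     (\<forall>\<alpha>. continuous_on {0..T} (u \<alpha>)) \<and>
     (\<forall>t\<in>{0..T}. \<forall>\<beta>. u \<beta> t = w \<beta> +
        diamond_int T \<pi> m (\<lambda>\<alpha> x. u \<alpha> (fst x) * G x + f \<alpha> x) t \<beta>)"

end

theory Submission
  imports Defs
begin

text \<open>The coefficient equations are triangular in the total degree \<open>|\<alpha>|\<close>: the equation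
  for \<open>u\<^sub>\<alpha>\<close> involves only the coefficients \<open>u\<^bsub>\<alpha> - \<epsilon>\<^sub>k\<^esub>\<close>, of degree \<open>|\<alpha>| - 1\<close>. Hence it is
  solved by recursion on \<open>|\<alpha>|\<close>, and every solution agrees with the recursive one by induction
  on \<open>|\<alpha>|\<close>. Continuity propagates along the recursion: for continuous \<open>u\<^sub>\<beta>\<close> the integrand
  \<open>(u\<^sub>\<beta> G + f\<^sub>\<beta>) m\<^sub>k\<close> is a product of two \<open>L\<^sub>2\<close> functions, hence integrable, and by Fubini
  its integral over \<open>[0,t] \<times> V\<close> is an indefinite integral in \<open>t\<close>, hence continuous.\<close>

lemma L2I: "g \<in> borel_measurable M \<Longrightarrow> integrable M (\<lambda>x. (g x)\<^sup>2) \<Longrightarrow> g \<in> L2 M"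
  and borel_measurable_L2: "g \<in> L2 M \<Longrightarrow> g \<in> borel_measurable M"
  and integrable_square_L2: "g \<in> L2 M \<Longrightarrow> integrable M (\<lambda>x. (g x)\<^sup>2)"
  by (simp_all add: L2_def)

lemma integrable_mult_L2:
  assumes g: "g \<in> L2 M" and h: "h \<in> L2 M"
  shows "integrable M (\<lambda>x. g x * h x)"
proof (rule Bochner_Integration.integrable_bound)
  show "integrable M (\<lambda>x. ((g x)\<^sup>2 + (h x)\<^sup>2) / 2)"
    using g h by (simp add: integrable_square_L2)
  show "(\<lambda>x. g x * h x) \<in> borel_measurable M"
    using g h by (intro borel_measurable_times borel_measurable_L2)
  have "\<bar>g x * h x\<bar> \<le> ((g x)\<^sup>2 + (h x)\<^sup>2) / 2" for x
    using sum_squares_bound[of "\<bar>g x\<bar>" "\<bar>h x\<bar>"] by (simp add: abs_mult)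
  then show "AE x in M. norm (g x * h x) \<le> norm (((g x)\<^sup>2 + (h x)\<^sup>2) / 2)"
    by (simp add: abs_le_iff)
qed

lemma L2_add:
  assumes g: "g \<in> L2 M" and h: "h \<in> L2 M"
  shows "(\<lambda>x. g x + h x) \<in> L2 M"
proof (rule L2I)
  show "(\<lambda>x. g x + h x) \<in> borel_measurable M"
    using g h by (intro borel_measurable_add borel_measurable_L2)
  show "integrable M (\<lambda>x. (g x + h x)\<^sup>2)"
  proof (rule Bochner_Integration.integrable_bound)
    show "integrable M (\<lambda>x. 2 * (g x)\<^sup>2 + 2 * (h x)\<^sup>2)"
      using g h by (simp add: integrable_square_L2)
    show "(\<lambda>x. (g x + h x)\<^sup>2) \<in> borel_measurable M"
      using g h by (intro borel_measurable_power borel_measurable_add borel_measurable_L2)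
    have "(g x + h x)\<^sup>2 \<le> 2 * (g x)\<^sup>2 + 2 * (h x)\<^sup>2" for x
      using sum_squares_bound[of "g x" "h x"] by (simp add: power2_sum)
    then show "AE x in M. norm ((g x + h x)\<^sup>2) \<le> norm (2 * (g x)\<^sup>2 + 2 * (h x)\<^sup>2)"
      by simp
  qed
qed

lemma L2_mult_bounded:
  assumes a: "a \<in> borel_measurable M" and B: "\<And>x. x \<in> space M \<Longrightarrow> \<bar>a x\<bar> \<le> B"
    and g: "g \<in> L2 M"
  shows "(\<lambda>x. a x * g x) \<in> L2 M"
proof (rule L2I)
  show "(\<lambda>x. a x * g x) \<in> borel_measurable M"
    using a borel_measurable_L2[OF g] by (rule borel_measurable_times)
  show "integrable M (\<lambda>x. (a x * g x)\<^sup>2)"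
  proof (rule Bochner_Integration.integrable_bound)
    show "integrable M (\<lambda>x. B\<^sup>2 * (g x)\<^sup>2)"
      using g by (simp add: integrable_square_L2)
    show "(\<lambda>x. (a x * g x)\<^sup>2) \<in> borel_measurable M"
      using a borel_measurable_L2[OF g] by (intro borel_measurable_power borel_measurable_times)
    have "(a x * g x)\<^sup>2 \<le> B\<^sup>2 * (g x)\<^sup>2" if "x \<in> space M" for x
    proof -
      have "(a x)\<^sup>2 \<le> B\<^sup>2"
        using B[OF that] by (metis abs_ge_zero power2_abs power_mono)
      then show ?thesis by (simp add: power_mult_distrib mult_right_mono)
    qed
    then show "AE x in M. norm ((a x * g x)\<^sup>2) \<le> norm (B\<^sup>2 * (g x)\<^sup>2)"
      by (intro AE_I2) simp
  qed
qed

lemma pair_sigma_finite_restrict_lborel: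
  fixes T :: real
  assumes "sigma_finite_measure \<pi>"
  shows "pair_sigma_finite (restrict_space lborel {0..T}) \<pi>"
proof -
  have "sigma_finite_measure (restrict_space lborel {0..T})"
    by (rule sigma_finite_measure_restrict_space) (auto intro: lborel.sigma_finite_measure_axioms)
  with assms show ?thesis
    by (simp add: pair_sigma_finite_def)
qed

lemma set_integrable_fiber_integral:
  fixes T :: real and h :: "real \<times> 'v \<Rightarrow> real"
  assumes "sigma_finite_measure \<pi>" and h: "integrable (U_measure T \<pi>) h"
  shows "set_integrable lborel {0..T} (\<lambda>r. \<integral>v. h (r, v) \<partial>\<pi>)"
proof -
  interpret P: pair_sigma_finite "restrict_space lborel {0..T}" \<pi>
    using assms(1) by (rule pair_sigma_finite_restrict_lborel)
  have "integrable (restrict_space lborel {0..T}) (\<lambda>r. \<integral>v. h (r, v) \<partial>\<pi>)"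
    using h unfolding U_measure_def by (rule P.integrable_fst')
  then show ?thesis
    by (simp add: set_integrable_def integrable_restrict_space)
qed

lemma int_tV_eq_integral:
  fixes h :: "real \<times> 'v \<Rightarrow> real"
  assumes "sigma_finite_measure \<pi>" and h: "integrable (U_measure T \<pi>) h" and t: "t \<in> {0..T}"
  shows "int_tV T \<pi> t h = integral {0..t} (\<lambda>r. \<integral>v. h (r, v) \<partial>\<pi>)"
proof -
  let ?N = "restrict_space lborel {0..T}"
  interpret P: pair_sigma_finite ?N \<pi>
    using assms(1) by (rule pair_sigma_finite_restrict_lborel)
  have "{0..t} \<times> space \<pi> \<in> sets (?N \<Otimes>\<^sub>M \<pi>)"
    using t by (intro pair_measureI) (auto simp: sets_restrict_space_iff)
  then have "integrable (?N \<Otimes>\<^sub>M \<pi>) (\<lambda>x. indicator ({0..t} \<times> space \<pi>) x *\<^sub>R h x)"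
    using h unfolding U_measure_def by (rule integrable_mult_indicator)
  then have "int_tV T \<pi> t h = (\<integral>r. (\<integral>v. indicator ({0..t} \<times> space \<pi>) (r, v) *\<^sub>R h (r, v) \<partial>\<pi>) \<partial>?N)"
    unfolding int_tV_def set_lebesgue_integral_def U_measure_def by (rule P.integral_fst'[symmetric])
  also have "\<dots> = (\<integral>r. indicator {0..t} r *\<^sub>R (\<integral>v. h (r, v) \<partial>\<pi>) \<partial>?N)"
  proof (rule Bochner_Integration.integral_cong[OF refl])
    fix r
    have "(\<integral>v. indicator ({0..t} \<times> space \<pi>) (r, v) *\<^sub>R h (r, v) \<partial>\<pi>)
        = (\<integral>v. indicator {0..t} r *\<^sub>R h (r, v) \<partial>\<pi>)"
      by (rule Bochner_Integration.integral_cong) (auto simp: indicator_def)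
    then show "(\<integral>v. indicator ({0..t} \<times> space \<pi>) (r, v) *\<^sub>R h (r, v) \<partial>\<pi>)
        = indicator {0..t} r *\<^sub>R (\<integral>v. h (r, v) \<partial>\<pi>)"
      by simp
  qed
  also have "\<dots> = (\<integral>r. indicator {0..T} r *\<^sub>R (indicator {0..t} r *\<^sub>R (\<integral>v. h (r, v) \<partial>\<pi>)) \<partial>lborel)"
    by (rule integral_restrict_space) simp
  also have "\<dots> = (LINT r:{0..t}|lborel. \<integral>v. h (r, v) \<partial>\<pi>)"
    using t unfolding set_lebesgue_integral_def
    by (intro Bochner_Integration.integral_cong) (auto simp: indicator_def)
  also have "\<dots> = integral {0..t} (\<lambda>r. \<integral>v. h (r, v) \<partial>\<pi>)"
    using set_integrable_fiber_integral[OF assms(1,2)] t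
    by (intro set_borel_integral_eq_integral(2)[OF set_integrable_subset]) auto
  finally show ?thesis .
qed

lemma continuous_on_int_tV:
  assumes "sigma_finite_measure \<pi>" and "integrable (U_measure T \<pi>) h"
  shows "continuous_on {0..T} (\<lambda>t. int_tV T \<pi> t h)"
proof -
  have "(\<lambda>r. \<integral>v. h (r, v) \<partial>\<pi>) integrable_on {0..T}"
    using set_integrable_fiber_integral[OF assms] by (rule set_borel_integral_eq_integral(1))
  then show ?thesis
    by (rule continuous_on_eq[OF indefinite_integral_continuous_1])
       (simp add: int_tV_eq_integral[OF assms])
qed

definition total_degree :: "mindex \<Rightarrow> nat" where
  "total_degree \<alpha> = (\<Sum>k\<in>Poly_Mapping.keys \<alpha>. Poly_Mapping.lookup \<alpha> k)"

lemma total_degree_eq_sum: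
  assumes "finite S" and "Poly_Mapping.keys \<alpha> \<subseteq> S"
  shows "total_degree \<alpha> = (\<Sum>k\<in>S. Poly_Mapping.lookup \<alpha> k)"
  unfolding total_degree_def using assms by (intro sum.mono_neutral_left) (auto simp: in_keys_iff)

lemma total_degree_add: "total_degree (\<alpha> + \<beta>) = total_degree \<alpha> + total_degree \<beta>"
proof -
  let ?S = "Poly_Mapping.keys \<alpha> \<union> Poly_Mapping.keys \<beta>"
  have "total_degree (\<alpha> + \<beta>) = (\<Sum>k\<in>?S. Poly_Mapping.lookup (\<alpha> + \<beta>) k)"
    using keys_add[of \<alpha> \<beta>] by (intro total_degree_eq_sum) auto
  also have "\<dots> = (\<Sum>k\<in>?S. Poly_Mapping.lookup \<alpha> k) + (\<Sum>k\<in>?S. Poly_Mapping.lookup \<beta> k)"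
    by (simp add: lookup_add sum.distrib)
  also have "\<dots> = total_degree \<alpha> + total_degree \<beta>"
    using total_degree_eq_sum[of ?S \<alpha>] total_degree_eq_sum[of ?S \<beta>] by simp
  finally show ?thesis .
qed

lemma total_degree_eps [simp]: "total_degree (eps k) = 1"
  by (simp add: total_degree_def eps_def)

lemma minus_eps_plus_eps:
  assumes "1 \<le> Poly_Mapping.lookup \<alpha> k"
  shows "\<alpha> - eps k + eps k = \<alpha>"
proof (rule poly_mapping_eqI)
  fix j
  show "Poly_Mapping.lookup (\<alpha> - eps k + eps k) j = Poly_Mapping.lookup \<alpha> j"
    using assms by (cases "j = k") (simp_all add: lookup_add lookup_minus eps_def lookup_single)
qed

lemma total_degree_minus_eps_less:
  assumes "1 \<le> Poly_Mapping.lookup \<alpha> k"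
  shows "total_degree (\<alpha> - eps k) < total_degree \<alpha>"
  using total_degree_add[of "\<alpha> - eps k" "eps k"] by (simp add: minus_eps_plus_eps[OF assms])

lemma mindex_induct:
  assumes "\<And>\<alpha>. (\<And>k. 1 \<le> Poly_Mapping.lookup \<alpha> k \<Longrightarrow> P (\<alpha> - eps k)) \<Longrightarrow> P \<alpha>"
  shows "P \<alpha>"
proof (induction "total_degree \<alpha>" arbitrary: \<alpha> rule: less_induct)
  case less
  show ?case
  proof (rule assms)
    fix k
    assume "1 \<le> Poly_Mapping.lookup \<alpha> k"
    then show "P (\<alpha> - eps k)"
      by (rule less[OF total_degree_minus_eps_less])
  qed
qed

function solution_coeff ::
  "real \<Rightarrow> 'v measure \<Rightarrow> (nat \<Rightarrow> real \<times> 'v \<Rightarrow> real) \<Rightarrow> (real \<times> 'v \<Rightarrow> real)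
     \<Rightarrow> (mindex \<Rightarrow> real) \<Rightarrow> (mindex \<Rightarrow> real \<times> 'v \<Rightarrow> real) \<Rightarrow> mindex \<Rightarrow> real \<Rightarrow> real" where
  "solution_coeff T \<pi> m G w f \<alpha> t = w \<alpha> +
     (\<Sum>k\<in>{k. 1 \<le> Poly_Mapping.lookup \<alpha> k}.
        int_tV T \<pi> t (\<lambda>x. (solution_coeff T \<pi> m G w f (\<alpha> - eps k) (fst x) * G x
                             + f (\<alpha> - eps k) x) * m k x))"
  by pat_completeness auto
termination
  by (relation "Wellfounded.measure (\<lambda>(T, \<pi>, m, G, w, f, \<alpha>, t). total_degree \<alpha>)")
     (auto intro: total_degree_minus_eps_less)

declare solution_coeff.simps [simp del]

lemma solution_coeff_eq_diamond_int:
  "solution_coeff T \<pi> m G w f \<beta> t =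
     w \<beta> + diamond_int T \<pi> m (\<lambda>\<alpha> x. solution_coeff T \<pi> m G w f \<alpha> (fst x) * G x + f \<alpha> x) t \<beta>"
  by (subst solution_coeff.simps) (simp add: diamond_int_def)

lemma L2_mult_continuous_time:
  fixes u :: "real \<Rightarrow> real"
  assumes u: "continuous_on {0..T} u" and g: "g \<in> L2 (U_measure T \<pi>)"
  shows "(\<lambda>x. u (fst x) * g x) \<in> L2 (U_measure T \<pi>)"
proof -
  obtain B where "\<forall>y\<in>u ` {0..T}. norm y \<le> B"
    using compact_imp_bounded[OF compact_continuous_image[OF u compact_Icc]]
    unfolding bounded_iff by blast
  then have B: "\<bar>u r\<bar> \<le> B" if "r \<in> {0..T}" for r
    using that by auto
  have "u \<in> borel_measurable (restrict_space lborel {0..T})"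
    using borel_measurable_continuous_on_restrict[OF u]
    by (simp add: measurable_def sets_restrict_space space_restrict_space)
  then have "(\<lambda>x. u (fst x)) \<in> borel_measurable (U_measure T \<pi>)"
    unfolding U_measure_def by (rule measurable_compose[OF measurable_fst])
  moreover have "\<bar>u (fst x)\<bar> \<le> B" if "x \<in> space (U_measure T \<pi>)" for x
    using that B by (auto simp: U_measure_def space_pair_measure)
  ultimately show ?thesis
    using g by (rule L2_mult_bounded)
qed

lemma integrable_coeff_integrand:
  fixes u :: "real \<Rightarrow> real"
  assumes "continuous_on {0..T} u" and "G \<in> L2 (U_measure T \<pi>)"
    and "c \<in> L2 (U_measure T \<pi>)" and "d \<in> L2 (U_measure T \<pi>)"
  shows "integrable (U_measure T \<pi>) (\<lambda>x. (u (fst x) * G x + c x) * d x)"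
  using assms by (intro integrable_mult_L2 L2_add L2_mult_continuous_time)

lemma continuous_on_solution_coeff:
  assumes sf: "sigma_finite_measure \<pi>" and m: "\<And>k. m k \<in> L2 (U_measure T \<pi>)"
    and G: "G \<in> L2 (U_measure T \<pi>)" and f: "\<And>\<alpha>. f \<alpha> \<in> L2 (U_measure T \<pi>)"
  shows "continuous_on {0..T} (solution_coeff T \<pi> m G w f \<alpha>)"
proof (induction \<alpha> rule: mindex_induct)
  case (1 \<alpha>)
  have "continuous_on {0..T} (\<lambda>t. int_tV T \<pi> t
          (\<lambda>x. (solution_coeff T \<pi> m G w f (\<alpha> - eps k) (fst x) * G x + f (\<alpha> - eps k) x) * m k x))"
    if "1 \<le> Poly_Mapping.lookup \<alpha> k" for k
    using sf integrable_coeff_integrand[OF 1[OF that] G f m] by (rule continuous_on_int_tV)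
  then show ?case
    by (subst continuous_on_cong[OF refl solution_coeff.simps])
       (intro continuous_on_add continuous_on_const continuous_on_sum, auto)
qed

lemma is_solution_solution_coeff:
  assumes "sigma_finite_measure \<pi>" and "\<And>k. m k \<in> L2 (U_measure T \<pi>)"
    and "G \<in> L2 (U_measure T \<pi>)" and "\<And>\<alpha>. f \<alpha> \<in> L2 (U_measure T \<pi>)"
  shows "is_solution T \<pi> m G w f (solution_coeff T \<pi> m G w f)"
  unfolding is_solution_def
proof (intro conjI allI ballI)
  show "continuous_on {0..T} (solution_coeff T \<pi> m G w f \<alpha>)" for \<alpha>
    using assms by (rule continuous_on_solution_coeff)
qed (rule solution_coeff_eq_diamond_int)

lemma diamond_int_cong:
  assumes "\<And>k x. 1 \<le> Poly_Mapping.lookup \<beta> k \<Longrightarrow> x \<in> {0..t} \<times> space \<pi> \<Longrightarrow>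
             h (\<beta> - eps k) x = h' (\<beta> - eps k) x"
  shows "diamond_int T \<pi> m h t \<beta> = diamond_int T \<pi> m h' t \<beta>"
  unfolding diamond_int_def int_tV_def set_lebesgue_integral_def
  using assms by (intro sum.cong refl Bochner_Integration.integral_cong) (auto simp: indicator_def)

lemma is_solution_unique:
  assumes u: "is_solution T \<pi> m G w f u" and u': "is_solution T \<pi> m G w f u'"
    and "t \<in> {0..T}"
  shows "u \<alpha> t = u' \<alpha> t"
  using \<open>t \<in> {0..T}\<close>
proof (induction \<alpha> arbitrary: t rule: mindex_induct)
  case (1 \<alpha>)
  have "diamond_int T \<pi> m (\<lambda>\<alpha> x. u \<alpha> (fst x) * G x + f \<alpha> x) t \<alpha>
      = diamond_int T \<pi> m (\<lambda>\<alpha> x. u' \<alpha> (fst x) * G x + f \<alpha> x) t \<alpha>"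
    using 1 by (intro diamond_int_cong) auto
  with u u' \<open>t \<in> {0..T}\<close> show ?case
    unfolding is_solution_def by simp
qed

theorem lemma2:
  fixes T :: real and \<pi> :: "'v measure"
    and m :: "nat \<Rightarrow> real \<times> 'v \<Rightarrow> real"
    and G :: "real \<times> 'v \<Rightarrow> real"
    and w :: "mindex \<Rightarrow> real"
    and f :: "mindex \<Rightarrow> real \<times> 'v \<Rightarrow> real"
  assumes "0 < T"
    and "sigma_finite_measure \<pi>"
    and "complete_ONS (U_measure T \<pi>) m"
    and "G \<in> L2 (U_measure T \<pi>)"
    and "\<forall>\<alpha>. f \<alpha> \<in> L2 (U_measure T \<pi>)"
  shows "\<exists>u. is_solution T \<pi> m G w f u
           \<and> (\<forall>u'. is_solution T \<pi> m G w f u' \<longrightarrow> (\<forall>\<alpha>. \<forall>t\<in>{0..T}. u' \<alpha> t = u \<alpha> t))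
           \<and> (\<forall>t\<in>{0..T}. u 0 t = w 0)
           \<and> (\<forall>\<alpha>. \<alpha> \<noteq> 0 \<longrightarrow> (\<forall>t\<in>{0..T}. u \<alpha> t = w \<alpha> +
                (\<Sum>k\<in>{k. Poly_Mapping.lookup \<alpha> k \<ge> 1}.
                   set_lebesgue_integral (U_measure T \<pi>) ({0..t} \<times> space \<pi>)
                     (\<lambda>(r,v). (u (\<alpha> - eps k) r * G (r,v) + f (\<alpha> - eps k) (r,v)) * m k (r,v)))))"
proof -
  let ?u = "solution_coeff T \<pi> m G w f"
  have "m k \<in> L2 (U_measure T \<pi>)" for k
    using assms(3) by (simp add: complete_ONS_def)
  with assms(2,4,5) have sol: "is_solution T \<pi> m G w f ?u"
    by (intro is_solution_solution_coeff) auto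
  show ?thesis
  proof (intro exI[of _ ?u] conjI allI impI ballI sol)
    show "u' \<alpha> t = ?u \<alpha> t" if "is_solution T \<pi> m G w f u'" and "t \<in> {0..T}" for u' \<alpha> t
      using is_solution_unique[OF that(1) sol that(2)] .
    show "?u 0 t = w 0" for t
      by (subst solution_coeff.simps) simp
    show "?u \<alpha> t = w \<alpha> + (\<Sum>k\<in>{k. Poly_Mapping.lookup \<alpha> k \<ge> 1}.
            set_lebesgue_integral (U_measure T \<pi>) ({0..t} \<times> space \<pi>)
              (\<lambda>(r,v). (?u (\<alpha> - eps k) r * G (r,v) + f (\<alpha> - eps k) (r,v)) * m k (r,v)))" for \<alpha> t
      by (subst solution_coeff.simps) (simp add: int_tV_def case_prod_unfold)
  qed
qed

end
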